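(* Let $X$ be a finite $T_0$ topological space, $\mathcal V$ a multivector field on $X$ with $X$ invariant, $\mathcal M=\{M_p\mid p\in\mathbb P\}$ a Morse predecomposition of $X$, and $\le$ an admissible preorder on $\mathbb P$. Let $\mathcal Q$ be a partition of $\mathbb P$ into nonempty subsets that are convex with respect to $\le$, and suppose that the relation $\le_{\mathcal Q}$ on $\mathcal Q$, defined by $Q\le_{\mathcal Q}Q'$ iff there exist $q\in Q$, $q'\in Q'$ with $q\le q'$, is a partial order. Then $\mathcal M':=\{M_Q\mid Q\in\mathcal Q\}$ is a Morse decomposition of $X$.
   Context: Notation: $\operatorname{cl}$ is closure; $A\subset X$ is locally closed if $\operatorname{cl}A\setminus A$ is closed. A multivector field $\mathcal V$ on $X$ is a partition of $X$ into locally closed sets (multivectors); $[x]_{\mathcal V}$ is the multivector containing $x$. A multivector $V$ is critical if $H(\operatorname{cl}V,\operatorname{cl}V\setminus V)$ (relative singular homology) is nontrivial, regular otherwise. $A$ is $\mathcal V$-compatible if it is a union of multivectors; $\langle A\rangle_{\mathcal V}$ is the smallest locally closed $\mathcal V$-compatible set containing $A$. $\Pi_{\mathcal V}(x)=\operatorname{cl}\{x\}\cup[x]_{\mathcal V}$. A solution is a partial map $\gamma:\mathbb Z\nrightarrow X$ with domain an integer interval and $\gamma(t+1)\in\Pi_{\mathcal V}(\gamma(t))$; a path has finite domain; a full solution has domain $\mathbb Z$. $\alpha(\gamma)=\langle\bigcap_{t\le0}\gamma((-\infty,t])\rangle_{\mathcal V}$, $\omega(\gamma)=\langle\bigcap_{t\ge0}\gamma([t,\infty))\rangle_{\mathcal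 V}$. A full solution is essential unless $\alpha(\gamma)$ or $\omega(\gamma)$ lies in a single regular multivector; an essential solution in $A$ is one with image in $A$. $\operatorname{Inv}S$ is the set of $x\in S$ with an essential solution $\gamma$ in $S$, $\gamma(0)=x$; $S$ is invariant if $\operatorname{Inv}S=S$. An invariant $S$ is isolated invariant if there is a closed $N\supset\Pi_{\mathcal V}(S)$ such that every path in $N$ with endpoints in $S$ has image in $S$. A full solution is a link from $S_1$ to $S_2$ if $\alpha(\gamma)\cap S_1\ne\emptyset\ne\omega(\gamma)\cap S_2$. A Morse predecomposition of $X$ is an indexed family of mutually disjoint isolated invariant subsets $\{M_p\mid p\in\mathbb P\}$ such that every essential solution in $X$ is a link from some $M_p$ to some $M_q$. A preorder $\le$ on $\mathbb P$ is admissible if a link from $M_p$ to $M_q$ implies $q\le p$. $\mathbb Q\subset\mathbb P$ is convex w.r.t. $\le$ if $p\le r\le q$ with $p,q\in\mathbb Q$ implies $r\in\mathbb Q$. An invariant $T$ is saturated if every essential solution $\gamma$ in $X$ with $\alpha(\gamma)\cup\omega(\gamma)\subset T$ has $\operatorname{im}\gamma\subset T$. A Morse decomposition is a Morse predecomposition with all members saturated and some admissible preorder being a partial order (here $\mathcal M'$ is indexed by $\mathcal Q$). For $C\subset X$, $\mathbb P_C=\{p\mid M_p\cap C\ne\emptyset\}$; for $\mathbb Q\subset\mathbb P$, $\operatorname{eSol}_{\mathbb Q}(X)$ is the set of essential solutions $\gamma$ in $X$ with $\mathbb P_{\alpha(\gamma)}\cap\mathbb Q\ne\emptyset\ne\mathbb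 P_{\omega(\gamma)}\cap\mathbb Q$, and $M_{\mathbb Q}=\bigcup\{\operatorname{im}\gamma\mid\gamma\in\operatorname{eSol}_{\mathbb Q}(X)\}$. *)

theory Defs
  imports "HOL-Analysis.Analysis" "HOL-Homology.Homology"
begin

definition locally_closed :: "'a topology \<Rightarrow> 'a set \<Rightarrow> bool" where
  "locally_closed X A \<longleftrightarrow> A \<subseteq> topspace X \<and> closedin X (X closure_of A - A)"

definition multivector_field :: "'a topology \<Rightarrow> 'a set set \<Rightarrow> bool" where
  "multivector_field X V \<longleftrightarrow>
     (\<forall>v\<in>V. v \<noteq> {} \<and> locally_closed X v) \<and> \<Union>V = topspace X \<and>
     (\<forall>v\<in>V. \<forall>w\<in>V. v \<noteq> w \<longrightarrow> v \<inter> w = {})"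

definition mv :: "'a set set \<Rightarrow> 'a \<Rightarrow> 'a set" where
  "mv V x = (THE v. v \<in> V \<and> x \<in> v)"

definition critical :: "'a topology \<Rightarrow> 'a set \<Rightarrow> bool" where
  "critical X v \<longleftrightarrow>
     (\<exists>p. \<not> trivial_group
            (relative_homology_group p (subtopology X (X closure_of v)) (X closure_of v - v)))"

definition regular :: "'a topology \<Rightarrow> 'a set \<Rightarrow> bool" where
  "regular X v \<longleftrightarrow> \<not> critical X v"

definition compatible :: "'a set set \<Rightarrow> 'a set \<Rightarrow> bool" where
  "compatible V A \<longleftrightarrow> (\<exists>W \<subseteq> V. A = \<Union>W)"

definition lc_hull :: "'a topology \<Rightarrow> 'a set set \<Rightarrow> 'a set \<Rightarrow> 'a set" where
  "lc_hull X V A = \<Inter>{B. A \<subseteq> B \<and> locally_closed X B \<and> compatible V B}"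

definition Pi_mv :: "'a topology \<Rightarrow> 'a set set \<Rightarrow> 'a \<Rightarrow> 'a set" where
  "Pi_mv X V x = X closure_of {x} \<union> mv V x"

definition full_solution :: "'a topology \<Rightarrow> 'a set set \<Rightarrow> (int \<Rightarrow> 'a) \<Rightarrow> bool" where
  "full_solution X V \<gamma> \<longleftrightarrow> (\<forall>t. \<gamma> t \<in> topspace X \<and> \<gamma> (t + 1) \<in> Pi_mv X V (\<gamma> t))"

definition sol_path :: "'a topology \<Rightarrow> 'a set set \<Rightarrow> (int \<Rightarrow> 'a) \<Rightarrow> int \<Rightarrow> int \<Rightarrow> bool" where
  "sol_path X V \<gamma> a b \<longleftrightarrow> a \<le> b \<and>
     (\<forall>t\<in>{a..b}. \<gamma> t \<in> topspace X \<and> (t < b \<longrightarrow> \<gamma> (t + 1) \<in> Pi_mv X V (\<gamma> t)))"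

definition alpha_lim :: "'a topology \<Rightarrow> 'a set set \<Rightarrow> (int \<Rightarrow> 'a) \<Rightarrow> 'a set" where
  "alpha_lim X V \<gamma> = lc_hull X V (\<Inter>t\<in>{..0}. \<gamma> ` {..t})"

definition omega_lim :: "'a topology \<Rightarrow> 'a set set \<Rightarrow> (int \<Rightarrow> 'a) \<Rightarrow> 'a set" where
  "omega_lim X V \<gamma> = lc_hull X V (\<Inter>t\<in>{0..}. \<gamma> ` {t..})"

definition essential :: "'a topology \<Rightarrow> 'a set set \<Rightarrow> (int \<Rightarrow> 'a) \<Rightarrow> bool" where
  "essential X V \<gamma> \<longleftrightarrow> full_solution X V \<gamma> \<and>
     \<not> (\<exists>v\<in>V. regular X v \<and> (alpha_lim X V \<gamma> \<subseteq> v \<or> omega_lim X V \<gamma> \<subseteq> v))"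

definition ess_sol_in :: "'a topology \<Rightarrow> 'a set set \<Rightarrow> 'a set \<Rightarrow> (int \<Rightarrow> 'a) \<Rightarrow> bool" where
  "ess_sol_in X V S \<gamma> \<longleftrightarrow> essential X V \<gamma> \<and> range \<gamma> \<subseteq> S"

definition Inv :: "'a topology \<Rightarrow> 'a set set \<Rightarrow> 'a set \<Rightarrow> 'a set" where
  "Inv X V S = {x \<in> S. \<exists>\<gamma>. ess_sol_in X V S \<gamma> \<and> \<gamma> 0 = x}"

definition invariant :: "'a topology \<Rightarrow> 'a set set \<Rightarrow> 'a set \<Rightarrow> bool" where
  "invariant X V S \<longleftrightarrow> Inv X V S = S"

definition isolated_invariant :: "'a topology \<Rightarrow> 'a set set \<Rightarrow> 'a set \<Rightarrow> bool" where
  "isolated_invariant X V S \<longleftrightarrow> invariant X V S \<and>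
     (\<exists>N. closedin X N \<and> (\<Union>x\<in>S. Pi_mv X V x) \<subseteq> N \<and>
        (\<forall>\<gamma> a b. sol_path X V \<gamma> a b \<and> \<gamma> ` {a..b} \<subseteq> N \<and> \<gamma> a \<in> S \<and> \<gamma> b \<in> S
                   \<longrightarrow> \<gamma> ` {a..b} \<subseteq> S))"

definition link :: "'a topology \<Rightarrow> 'a set set \<Rightarrow> (int \<Rightarrow> 'a) \<Rightarrow> 'a set \<Rightarrow> 'a set \<Rightarrow> bool" where
  "link X V \<gamma> S1 S2 \<longleftrightarrow> full_solution X V \<gamma> \<and>
     alpha_lim X V \<gamma> \<inter> S1 \<noteq> {} \<and> omega_lim X V \<gamma> \<inter> S2 \<noteq> {}"

definition morse_predecomposition ::
  "'a topology \<Rightarrow> 'a set set \<Rightarrow> 'p set \<Rightarrow> ('p \<Rightarrow> 'a set) \<Rightarrow> bool" where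
  "morse_predecomposition X V P M \<longleftrightarrow>
     (\<forall>p\<in>P. \<forall>q\<in>P. p \<noteq> q \<longrightarrow> M p \<inter> M q = {}) \<and>
     (\<forall>p\<in>P. isolated_invariant X V (M p)) \<and>
     (\<forall>\<gamma>. ess_sol_in X V (topspace X) \<gamma> \<longrightarrow> (\<exists>p\<in>P. \<exists>q\<in>P. link X V \<gamma> (M p) (M q)))"

definition preorder_on :: "'p set \<Rightarrow> ('p \<Rightarrow> 'p \<Rightarrow> bool) \<Rightarrow> bool" where
  "preorder_on P leq \<longleftrightarrow> (\<forall>p\<in>P. leq p p) \<and>
     (\<forall>p\<in>P. \<forall>q\<in>P. \<forall>r\<in>P. leq p q \<and> leq q r \<longrightarrow> leq p r)"

definition partial_order_on' :: "'p set \<Rightarrow> ('p \<Rightarrow> 'p \<Rightarrow> bool) \<Rightarrow> bool" where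
  "partial_order_on' P leq \<longleftrightarrow> preorder_on P leq \<and>
     (\<forall>p\<in>P. \<forall>q\<in>P. leq p q \<and> leq q p \<longrightarrow> p = q)"

definition admissible ::
  "'a topology \<Rightarrow> 'a set set \<Rightarrow> 'p set \<Rightarrow> ('p \<Rightarrow> 'a set) \<Rightarrow> ('p \<Rightarrow> 'p \<Rightarrow> bool) \<Rightarrow> bool" where
  "admissible X V P M leq \<longleftrightarrow> preorder_on P leq \<and>
     (\<forall>p\<in>P. \<forall>q\<in>P. (\<exists>\<gamma>. link X V \<gamma> (M p) (M q)) \<longrightarrow> leq q p)"

definition saturated :: "'a topology \<Rightarrow> 'a set set \<Rightarrow> 'a set \<Rightarrow> bool" where
  "saturated X V T \<longleftrightarrow> invariant X V T \<and>
     (\<forall>\<gamma>. ess_sol_in X V (topspace X) \<gamma> \<and> alpha_lim X V \<gamma> \<union> omega_lim X V \<gamma> \<subseteq> T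
          \<longrightarrow> range \<gamma> \<subseteq> T)"

definition morse_decomposition ::
  "'a topology \<Rightarrow> 'a set set \<Rightarrow> 'p set \<Rightarrow> ('p \<Rightarrow> 'a set) \<Rightarrow> bool" where
  "morse_decomposition X V P M \<longleftrightarrow> morse_predecomposition X V P M \<and>
     (\<forall>p\<in>P. saturated X V (M p)) \<and>
     (\<exists>leq. admissible X V P M leq \<and> partial_order_on' P leq)"

definition convex_wrt :: "'p set \<Rightarrow> ('p \<Rightarrow> 'p \<Rightarrow> bool) \<Rightarrow> 'p set \<Rightarrow> bool" where
  "convex_wrt P leq Q \<longleftrightarrow> (\<forall>p\<in>Q. \<forall>q\<in>Q. \<forall>r\<in>P. leq p r \<and> leq r q \<longrightarrow> r \<in> Q)"

definition set_partition :: "'p set \<Rightarrow> 'p set set \<Rightarrow> bool" where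
  "set_partition P \<Q> \<longleftrightarrow> (\<forall>Q\<in>\<Q>. Q \<noteq> {}) \<and> \<Union>\<Q> = P \<and>
     (\<forall>Q\<in>\<Q>. \<forall>Q'\<in>\<Q>. Q \<noteq> Q' \<longrightarrow> Q \<inter> Q' = {})"

definition induced_le :: "('p \<Rightarrow> 'p \<Rightarrow> bool) \<Rightarrow> 'p set \<Rightarrow> 'p set \<Rightarrow> bool" where
  "induced_le leq Q Q' \<longleftrightarrow> (\<exists>q\<in>Q. \<exists>q'\<in>Q'. leq q q')"

definition idx_meet :: "'p set \<Rightarrow> ('p \<Rightarrow> 'a set) \<Rightarrow> 'a set \<Rightarrow> 'p set" where
  "idx_meet P M C = {p \<in> P. M p \<inter> C \<noteq> {}}"

definition eSol :: "'a topology \<Rightarrow> 'a set set \<Rightarrow> 'p set \<Rightarrow> ('p \<Rightarrow> 'a set) \<Rightarrow> 'p set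
                    \<Rightarrow> (int \<Rightarrow> 'a) set" where
  "eSol X V P M Q = {\<gamma>. ess_sol_in X V (topspace X) \<gamma> \<and>
      idx_meet P M (alpha_lim X V \<gamma>) \<inter> Q \<noteq> {} \<and> idx_meet P M (omega_lim X V \<gamma>) \<inter> Q \<noteq> {}}"

definition M_Q :: "'a topology \<Rightarrow> 'a set set \<Rightarrow> 'p set \<Rightarrow> ('p \<Rightarrow> 'a set) \<Rightarrow> 'p set \<Rightarrow> 'a set" where
  "M_Q X V P M Q = (\<Union>\<gamma>\<in>eSol X V P M Q. range \<gamma>)"

end

theory Submission
  imports Defs
begin

text \<open>
  On a finite space everything is governed by reachability along the multivalued map
  \<open>x \<mapsto> cl {x} \<union> [x]\<close>.  The hull defining a limit set only adds points lying on
  paths between recurrent points, so every point of the \<alpha>-limit set reaches every point of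
  the \<omega>-limit set.  Conversely, an essential solution can be spliced with any path leaving or
  entering it without changing its limit sets.  Splicing shows that \<open>M\<^sub>Q\<close>, the union of
  the essential solutions running from \<open>Q\<close> back to \<open>Q\<close>, is invariant and isolated by the
  whole space, and that a path from \<open>M\<^sub>Q\<close> to \<open>M\<^sub>Q'\<close> yields a link from some Morse set
  \<open>M\<^sub>q\<close> with \<open>q \<in> Q\<close> to some \<open>M\<^sub>r\<close> with \<open>r \<in> Q'\<close>, whence \<open>Q' \<le>\<^sub>\<Q> Q\<close>.  So a common
  point of \<open>M\<^sub>Q\<close> and \<open>M\<^sub>Q'\<close> forces \<open>Q = Q'\<close> by antisymmetry, \<open>\<le>\<^sub>\<Q>\<close> is admissible, and
  saturation follows because each \<open>M\<^sub>p\<close> lies in \<open>M\<^sub>Q\<close> for the block \<open>Q\<close> containing \<open>p\<close>.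
\<close>

section \<open>Finite spaces and multivectors\<close>

lemma closure_of_finite_eq_UN_singletons:
  "finite S \<Longrightarrow> X closure_of S = (\<Union>x\<in>S. X closure_of {x})"
  using closure_of_Union[of "(\<lambda>x. {x}) ` S" X] by simp

lemma finite_space_locally_closedI:
  assumes fin: "finite (topspace X)" and S: "S \<subseteq> topspace X"
    and convex: "\<And>x a b. x \<in> S \<Longrightarrow> a \<in> X closure_of {x} \<Longrightarrow> b \<in> X closure_of {a} \<Longrightarrow> b \<in> S
                   \<Longrightarrow> a \<in> S"
  shows "locally_closed X S"
proof -
  have fin_S: "finite S" using S fin finite_subset by blast
  have fin_frontier: "finite (X closure_of S - S)"
    using fin closure_of_subset_topspace finite_subset by (metis Diff_subset subset_trans)
  have "X closure_of (X closure_of S - S) \<subseteq> X closure_of S - S"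
  proof
    fix b assume "b \<in> X closure_of (X closure_of S - S)"
    then obtain a where a: "a \<in> X closure_of S" "a \<notin> S" and b: "b \<in> X closure_of {a}"
      using closure_of_finite_eq_UN_singletons[OF fin_frontier] by blast
    obtain x where x: "x \<in> S" "a \<in> X closure_of {x}"
      using a(1) closure_of_finite_eq_UN_singletons[OF fin_S] by blast
    have "X closure_of {a} \<subseteq> X closure_of {x}"
      using closure_of_mono[of "{a}" "X closure_of {x}" X] x(2) by simp
    then have "b \<in> X closure_of S"
      using b x(1) closure_of_finite_eq_UN_singletons[OF fin_S] by blast
    moreover have "b \<notin> S" using convex[OF x b] a(2) by blast
    ultimately show "b \<in> X closure_of S - S" by blast
  qed
  then have "closedin X (X closure_of S - S)"
    using closure_of_subset_topspace[of X S] by (auto simp add: closure_of_subset_eq[symmetric])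
  with S show ?thesis unfolding locally_closed_def by blast
qed

lemma multivector_field_Union: "multivector_field X V \<Longrightarrow> \<Union>V = topspace X"
  unfolding multivector_field_def by simp

lemma mv_eqI:
  assumes "multivector_field X V" "v \<in> V" "x \<in> v"
  shows "mv V x = v"
  unfolding mv_def
proof (rule the_equality)
  show "v \<in> V \<and> x \<in> v" using assms(2,3) ..
  fix w assume w: "w \<in> V \<and> x \<in> w"
  have "\<forall>v\<in>V. \<forall>w\<in>V. v \<noteq> w \<longrightarrow> v \<inter> w = {}"
    using assms(1) unfolding multivector_field_def by simp
  then show "w = v" using w assms(2,3) by blast
qed

lemma
  assumes "multivector_field X V" "x \<in> topspace X"
  shows mv_in_V: "mv V x \<in> V" and mem_mv: "x \<in> mv V x"
proof -
  obtain v where "v \<in> V" "x \<in> v" using assms multivector_field_Union by blast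
  then show "mv V x \<in> V" "x \<in> mv V x" using mv_eqI[OF assms(1)] by auto
qed

lemma mv_subset_topspace:
  assumes "multivector_field X V" "x \<in> topspace X"
  shows "mv V x \<subseteq> topspace X"
  using mv_in_V[OF assms] multivector_field_Union[OF assms(1)] by blast

lemma mv_sym:
  assumes "multivector_field X V" "x \<in> topspace X" "y \<in> mv V x"
  shows "x \<in> mv V y"
  using mv_eqI[OF assms(1) mv_in_V[OF assms(1,2)] assms(3)] mem_mv[OF assms(1,2)] by simp

lemma compatible_if_mv_closed:
  assumes "multivector_field X V" "S \<subseteq> topspace X" "\<And>x. x \<in> S \<Longrightarrow> mv V x \<subseteq> S"
  shows "compatible V S"
  unfolding compatible_def
proof (intro exI conjI)
  show "mv V ` S \<subseteq> V" using assms(2) mv_in_V[OF assms(1)] by blast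
  show "S = \<Union>(mv V ` S)" using assms(2,3) mem_mv[OF assms(1)] by blast
qed

lemma Pi_mv_subset_topspace:
  assumes "multivector_field X V" "x \<in> topspace X"
  shows "Pi_mv X V x \<subseteq> topspace X"
  using mv_subset_topspace[OF assms] closure_of_subset_topspace[of X "{x}"]
  unfolding Pi_mv_def by blast

lemma self_in_Pi_mv:
  "multivector_field X V \<Longrightarrow> x \<in> topspace X \<Longrightarrow> x \<in> Pi_mv X V x"
  unfolding Pi_mv_def using mem_mv by fast

lemma lc_hull_least:
  "A \<subseteq> B \<Longrightarrow> locally_closed X B \<Longrightarrow> compatible V B \<Longrightarrow> lc_hull X V A \<subseteq> B"
  unfolding lc_hull_def by (rule Inter_lower) simp

section \<open>Recurrent points and limit sets\<close>

definition past_recurrent :: "(int \<Rightarrow> 'a) \<Rightarrow> 'a set" where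
  "past_recurrent \<gamma> = {x. \<forall>t. \<exists>s\<le>t. \<gamma> s = x}"

definition future_recurrent :: "(int \<Rightarrow> 'a) \<Rightarrow> 'a set" where
  "future_recurrent \<gamma> = {x. \<forall>t. \<exists>s\<ge>t. \<gamma> s = x}"

lemma alpha_lim_eq: "alpha_lim X V \<gamma> = lc_hull X V (past_recurrent \<gamma>)"
proof -
  have "(\<Inter>t\<in>{..0}. \<gamma> ` {..t}) = past_recurrent \<gamma>"
  proof (intro equalityI subsetI)
    fix x assume x: "x \<in> (\<Inter>t\<in>{..0}. \<gamma> ` {..t})"
    have "\<exists>s\<le>t. \<gamma> s = x" for t
      using x by (force dest: bspec[of _ _ "min t 0"])
    then show "x \<in> past_recurrent \<gamma>" unfolding past_recurrent_def by blast
  qed (auto simp: past_recurrent_def)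
  then show ?thesis unfolding alpha_lim_def by simp
qed

lemma omega_lim_eq: "omega_lim X V \<gamma> = lc_hull X V (future_recurrent \<gamma>)"
proof -
  have "(\<Inter>t\<in>{0..}. \<gamma> ` {t..}) = future_recurrent \<gamma>"
  proof (intro equalityI subsetI)
    fix x assume x: "x \<in> (\<Inter>t\<in>{0..}. \<gamma> ` {t..})"
    have "\<exists>s\<ge>t. \<gamma> s = x" for t
      using x by (force dest: bspec[of _ _ "max t 0"])
    then show "x \<in> future_recurrent \<gamma>" unfolding future_recurrent_def by blast
  qed (auto simp: future_recurrent_def)
  then show ?thesis unfolding omega_lim_def by simp
qed

lemma past_recurrent_shift:
  assumes "\<And>t. t \<le> c \<Longrightarrow> \<delta> t = \<rho> (t + k)"
  shows "past_recurrent \<delta> = past_recurrent \<rho>"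
proof (intro equalityI subsetI)
  fix x assume x: "x \<in> past_recurrent \<delta>"
  have "\<exists>u\<le>t. \<rho> u = x" for t
  proof -
    obtain u where "u \<le> min (t - k) c" "\<delta> u = x" using x unfolding past_recurrent_def by blast
    then show ?thesis using assms[of u] by (intro exI[of _ "u + k"]) auto
  qed
  then show "x \<in> past_recurrent \<rho>" unfolding past_recurrent_def by blast
next
  fix x assume x: "x \<in> past_recurrent \<rho>"
  have "\<exists>u\<le>t. \<delta> u = x" for t
  proof -
    obtain u where "u \<le> min t c + k" "\<rho> u = x" using x unfolding past_recurrent_def by blast
    then show ?thesis using assms[of "u - k"] by (intro exI[of _ "u - k"]) auto
  qed
  then show "x \<in> past_recurrent \<delta>" unfolding past_recurrent_def by blast
qed

lemma future_recurrent_shift: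
  assumes "\<And>t. c \<le> t \<Longrightarrow> \<delta> t = \<rho> (t + k)"
  shows "future_recurrent \<delta> = future_recurrent \<rho>"
proof (intro equalityI subsetI)
  fix x assume x: "x \<in> future_recurrent \<delta>"
  have "\<exists>u\<ge>t. \<rho> u = x" for t
  proof -
    obtain u where "max (t - k) c \<le> u" "\<delta> u = x" using x unfolding future_recurrent_def by blast
    then show ?thesis using assms[of u] by (intro exI[of _ "u + k"]) auto
  qed
  then show "x \<in> future_recurrent \<rho>" unfolding future_recurrent_def by blast
next
  fix x assume x: "x \<in> future_recurrent \<rho>"
  have "\<exists>u\<ge>t. \<delta> u = x" for t
  proof -
    obtain u where "max t c + k \<le> u" "\<rho> u = x" using x unfolding future_recurrent_def by blast
    then show ?thesis using assms[of "u - k"] by (intro exI[of _ "u - k"]) auto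
  qed
  then show "x \<in> future_recurrent \<delta>" unfolding future_recurrent_def by blast
qed

section \<open>Reachability and concatenation of solutions\<close>

definition mv_step :: "'a topology \<Rightarrow> 'a set set \<Rightarrow> 'a \<Rightarrow> 'a \<Rightarrow> bool" where
  "mv_step X V x y \<longleftrightarrow> x \<in> topspace X \<and> y \<in> topspace X \<and> y \<in> Pi_mv X V x"

lemma sol_path_snoc:
  assumes "sol_path X V \<sigma> a b" "y \<in> topspace X" "y \<in> Pi_mv X V (\<sigma> b)"
  shows "sol_path X V (\<sigma>(b + 1 := y)) a (b + 1)"
  using assms unfolding sol_path_def by auto

lemma sol_path_if_reachable:
  assumes "(mv_step X V)\<^sup>*\<^sup>* x y" "x \<in> topspace X"
  obtains \<sigma> b where "sol_path X V \<sigma> 0 b" "\<sigma> 0 = x" "\<sigma> b = y"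
  using assms(1)
proof (induction arbitrary: thesis rule: rtranclp_induct)
  case base
  have "sol_path X V (\<lambda>_. x) 0 0" using assms(2) unfolding sol_path_def by simp
  then show ?case using base by blast
next
  case (step y z)
  obtain \<sigma> b where \<sigma>: "sol_path X V \<sigma> 0 b" "\<sigma> 0 = x" "\<sigma> b = y" using step.IH by blast
  have "0 \<le> b" using \<sigma>(1) unfolding sol_path_def by simp
  then show ?case
    using step.prems sol_path_snoc[OF \<sigma>(1), of z] step.hyps(2) \<sigma>(2,3)
    unfolding mv_step_def by simp
qed

lemma full_solution_reachable:
  assumes "full_solution X V \<gamma>" "s \<le> t"
  shows "(mv_step X V)\<^sup>*\<^sup>* (\<gamma> s) (\<gamma> t)"
  using assms(2)
proof (induction t rule: int_ge_induct)
  case (step t)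
  have "mv_step X V (\<gamma> t) (\<gamma> (t + 1))"
    using assms(1) unfolding full_solution_def mv_step_def by blast
  with step.IH show ?case by (rule rtranclp.rtrancl_into_rtrancl)
qed simp

lemma full_solution_concat:
  assumes \<rho>: "full_solution X V \<rho>" and \<rho>': "full_solution X V \<rho>'"
    and \<sigma>: "sol_path X V \<sigma> a b" and start: "\<rho> s = \<sigma> a" and stop: "\<rho>' s' = \<sigma> b"
  obtains \<delta> where "full_solution X V \<delta>" "past_recurrent \<delta> = past_recurrent \<rho>"
    "future_recurrent \<delta> = future_recurrent \<rho>'" "\<sigma> ` {a..b} \<subseteq> range \<delta>" "\<delta> 0 = \<sigma> a"
proof -
  define d where "d = b - a"
  define \<delta> where
    "\<delta> t = (if t < 0 then \<rho> (t + s) else if t \<le> d then \<sigma> (a + t) else \<rho>' (t + (s' - d)))" for t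
  have "0 \<le> d" using \<sigma> unfolding sol_path_def d_def by simp
  have past: "\<delta> t = \<rho> (t + s)" if "t \<le> 0" for t
    using that start \<open>0 \<le> d\<close> unfolding \<delta>_def by auto
  have middle: "\<delta> t = \<sigma> (a + t)" if "0 \<le> t" "t \<le> d" for t
    using that unfolding \<delta>_def by auto
  have future: "\<delta> t = \<rho>' (t + (s' - d))" if "d \<le> t" for t
    using that stop \<open>0 \<le> d\<close> unfolding \<delta>_def d_def by auto
  have "full_solution X V \<delta>"
    unfolding full_solution_def
  proof (intro allI conjI)
    fix t
    consider "t < 0" | "0 \<le> t" "t < d" | "d \<le> t" by linarith
    then show "\<delta> t \<in> topspace X"
      using \<rho> \<rho>' \<sigma> past middle future unfolding full_solution_def sol_path_def d_def
      by cases auto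
    consider "t + 1 \<le> 0" | "0 \<le> t" "t < d" | "d \<le> t" by linarith
    then show "\<delta> (t + 1) \<in> Pi_mv X V (\<delta> t)"
    proof cases
      case 1
      then have "\<delta> (t + 1) = \<rho> ((t + s) + 1)" "\<delta> t = \<rho> (t + s)"
        using past by (simp_all add: ac_simps)
      then show ?thesis using \<rho> unfolding full_solution_def by simp
    next
      case 2
      then have "\<delta> (t + 1) = \<sigma> ((a + t) + 1)" "\<delta> t = \<sigma> (a + t)"
        using middle by (simp_all add: ac_simps)
      then show ?thesis using \<sigma> 2 unfolding sol_path_def d_def by simp
    next
      case 3
      then have "\<delta> (t + 1) = \<rho>' ((t + (s' - d)) + 1)" "\<delta> t = \<rho>' (t + (s' - d))"
        using future by (simp_all add: ac_simps)
      then show ?thesis using \<rho>' unfolding full_solution_def by simp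
    qed
  qed
  moreover have "past_recurrent \<delta> = past_recurrent \<rho>"
    using past by (rule past_recurrent_shift)
  moreover have "future_recurrent \<delta> = future_recurrent \<rho>'"
    using future by (rule future_recurrent_shift)
  moreover have "\<sigma> ` {a..b} \<subseteq> range \<delta>"
  proof
    fix y assume "y \<in> \<sigma> ` {a..b}"
    then obtain u where "a \<le> u" "u \<le> b" "y = \<sigma> u" by auto
    then have "y = \<delta> (u - a)" using middle[of "u - a"] unfolding d_def by simp
    then show "y \<in> range \<delta>" by simp
  qed
  moreover have "\<delta> 0 = \<sigma> a" using middle \<open>0 \<le> d\<close> by simp
  ultimately show ?thesis using that by blast
qed

lemma essential_concat:
  assumes \<rho>: "essential X V \<rho>" and \<rho>': "essential X V \<rho>'"
    and \<sigma>: "sol_path X V \<sigma> a b" and "\<rho> s = \<sigma> a" "\<rho>' s' = \<sigma> b"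
  obtains \<delta> where "essential X V \<delta>" "alpha_lim X V \<delta> = alpha_lim X V \<rho>"
    "omega_lim X V \<delta> = omega_lim X V \<rho>'" "\<sigma> ` {a..b} \<subseteq> range \<delta>" "\<delta> 0 = \<sigma> a"
proof -
  obtain \<delta> where \<delta>: "full_solution X V \<delta>" "past_recurrent \<delta> = past_recurrent \<rho>"
    "future_recurrent \<delta> = future_recurrent \<rho>'" "\<sigma> ` {a..b} \<subseteq> range \<delta>" "\<delta> 0 = \<sigma> a"
    using full_solution_concat[of X V \<rho> \<rho>' \<sigma> a b s s'] assms unfolding essential_def by blast
  then have "alpha_lim X V \<delta> = alpha_lim X V \<rho>" "omega_lim X V \<delta> = omega_lim X V \<rho>'"
    by (simp_all add: alpha_lim_eq omega_lim_eq)
  moreover from this have "essential X V \<delta>"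
    using \<rho> \<rho>' \<delta>(1) unfolding essential_def by simp
  ultimately show ?thesis using that \<delta>(4,5) by blast
qed

section \<open>Sets that are convex for the flow\<close>

lemma locally_closed_compatible_if_step_convex:
  assumes fin: "finite (topspace X)" and mvf: "multivector_field X V" and S: "S \<subseteq> topspace X"
    and convex: "\<And>x y z. x \<in> S \<Longrightarrow> z \<in> S \<Longrightarrow> mv_step X V x y \<Longrightarrow> mv_step X V y z \<Longrightarrow> y \<in> S"
  shows "locally_closed X S" "compatible V S"
proof -
  show "locally_closed X S"
  proof (rule finite_space_locally_closedI[OF fin S])
    fix x a b assume x: "x \<in> S" and a: "a \<in> X closure_of {x}"
      and b: "b \<in> X closure_of {a}" and "b \<in> S"
    have "mv_step X V x a" "mv_step X V a b"
      using x a b S closure_of_subset_topspace unfolding mv_step_def Pi_mv_def by fastforce+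
    with convex x \<open>b \<in> S\<close> show "a \<in> S" by blast
  qed
  show "compatible V S"
  proof (rule compatible_if_mv_closed[OF mvf S])
    fix z assume z: "z \<in> S"
    show "mv V z \<subseteq> S"
    proof
      fix w assume w: "w \<in> mv V z"
      have "z \<in> topspace X" "w \<in> topspace X" using z w S mv_subset_topspace[OF mvf] by blast+
      moreover have "z \<in> mv V w" using mv_sym[OF mvf _ w] calculation by blast
      ultimately have "mv_step X V z w" "mv_step X V w z"
        using w unfolding mv_step_def Pi_mv_def by blast+
      with convex z show "w \<in> S" by blast
    qed
  qed
qed

lemma lc_hull_subset_reachable_between:
  assumes fin: "finite (topspace X)" and mvf: "multivector_field X V" and A: "A \<subseteq> topspace X"
  shows "lc_hull X V A \<subseteq>
    {z \<in> topspace X. (\<exists>a\<in>A. (mv_step X V)\<^sup>*\<^sup>* a z) \<and> (\<exists>a\<in>A. (mv_step X V)\<^sup>*\<^sup>* z a)}"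
    (is "_ \<subseteq> ?B")
proof -
  have convex: "y \<in> ?B" if x: "x \<in> ?B" and z: "z \<in> ?B"
    and xy: "mv_step X V x y" and yz: "mv_step X V y z" for x y z
  proof -
    obtain a a' where "a \<in> A" "(mv_step X V)\<^sup>*\<^sup>* a x" "a' \<in> A" "(mv_step X V)\<^sup>*\<^sup>* z a'"
      using x z by blast
    moreover from this have "(mv_step X V)\<^sup>*\<^sup>* a y" "(mv_step X V)\<^sup>*\<^sup>* y a'"
      using xy yz by (auto intro: rtranclp.rtrancl_into_rtrancl converse_rtranclp_into_rtranclp)
    moreover have "y \<in> topspace X" using xy unfolding mv_step_def by blast
    ultimately show ?thesis by blast
  qed
  have "?B \<subseteq> topspace X" by blast
  note B_lc_compatible = locally_closed_compatible_if_step_convex[OF fin mvf this convex]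
  show ?thesis by (rule lc_hull_least[OF _ B_lc_compatible]) (use A in blast)
qed

lemma past_recurrent_subset_topspace: "full_solution X V \<gamma> \<Longrightarrow> past_recurrent \<gamma> \<subseteq> topspace X"
  unfolding past_recurrent_def full_solution_def by blast

lemma future_recurrent_subset_topspace: "full_solution X V \<gamma> \<Longrightarrow> future_recurrent \<gamma> \<subseteq> topspace X"
  unfolding future_recurrent_def full_solution_def by blast

lemma alpha_lim_reaches_omega_lim:
  assumes fin: "finite (topspace X)" and mvf: "multivector_field X V" and \<gamma>: "full_solution X V \<gamma>"
    and "y \<in> alpha_lim X V \<gamma>" "y' \<in> omega_lim X V \<gamma>"
  shows "(mv_step X V)\<^sup>*\<^sup>* y y'"
proof -
  obtain a where a: "a \<in> past_recurrent \<gamma>" "(mv_step X V)\<^sup>*\<^sup>* y a"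
    using lc_hull_subset_reachable_between[OF fin mvf past_recurrent_subset_topspace[OF \<gamma>]] assms(4)
    unfolding alpha_lim_eq by blast
  obtain a' where a': "a' \<in> future_recurrent \<gamma>" "(mv_step X V)\<^sup>*\<^sup>* a' y'"
    using lc_hull_subset_reachable_between[OF fin mvf future_recurrent_subset_topspace[OF \<gamma>]] assms(5)
    unfolding omega_lim_eq by blast
  obtain s u where "\<gamma> s = a" "s \<le> u" "\<gamma> u = a'"
    using a(1) a'(1) unfolding past_recurrent_def future_recurrent_def by blast
  then have "(mv_step X V)\<^sup>*\<^sup>* a a'" using full_solution_reachable[OF \<gamma>] by blast
  then show ?thesis using a(2) a'(2) by (meson rtranclp_trans)
qed

lemma invariant_subset_topspace:
  assumes "invariant X V S"
  shows "S \<subseteq> topspace X"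
proof
  fix x assume "x \<in> S"
  then obtain \<gamma> where "essential X V \<gamma>" "\<gamma> 0 = x"
    using assms unfolding invariant_def Inv_def ess_sol_in_def by blast
  then show "x \<in> topspace X" unfolding essential_def full_solution_def by metis
qed

lemma isolated_invariant_step_convex:
  assumes mvf: "multivector_field X V" and iso: "isolated_invariant X V S"
    and x: "x \<in> S" and z: "z \<in> S" and xy: "mv_step X V x y" and yz: "mv_step X V y z"
  shows "y \<in> S"
proof -
  obtain N where N: "(\<Union>x\<in>S. Pi_mv X V x) \<subseteq> N" and isolating:
    "\<And>\<gamma> a b. sol_path X V \<gamma> a b \<Longrightarrow> \<gamma> ` {a..b} \<subseteq> N \<Longrightarrow> \<gamma> a \<in> S \<Longrightarrow> \<gamma> b \<in> S
      \<Longrightarrow> \<gamma> ` {a..b} \<subseteq> S"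
    using iso unfolding isolated_invariant_def by metis
  define \<sigma> where "\<sigma> t = (if t = 0 then x else if t = 1 then y else z)" for t :: int
  have interval: "{0..2::int} = {0, 1, 2}" by auto
  have path: "sol_path X V \<sigma> 0 2"
    using xy yz unfolding sol_path_def interval by (simp add: \<sigma>_def mv_step_def)
  have image: "\<sigma> ` {0..2} = {x, y, z}"
    unfolding interval by (auto simp: \<sigma>_def)
  have "x \<in> Pi_mv X V x" "z \<in> Pi_mv X V z" "y \<in> Pi_mv X V x"
    using xy yz self_in_Pi_mv[OF mvf] unfolding mv_step_def by blast+
  then have in_N: "\<sigma> ` {0..2} \<subseteq> N" unfolding image using N x z by blast
  have "\<sigma> 0 \<in> S" "\<sigma> 2 \<in> S" using x z by (simp_all add: \<sigma>_def)
  then have "{x, y, z} \<subseteq> S" using isolating[OF path in_N] unfolding image by simp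
  then show "y \<in> S" by simp
qed

lemma isolated_invariant_limits_subset:
  assumes fin: "finite (topspace X)" and mvf: "multivector_field X V"
    and iso: "isolated_invariant X V S" and "range \<gamma> \<subseteq> S"
  shows "alpha_lim X V \<gamma> \<subseteq> S" "omega_lim X V \<gamma> \<subseteq> S"
proof -
  have "invariant X V S" using iso unfolding isolated_invariant_def by simp
  then have "S \<subseteq> topspace X" by (rule invariant_subset_topspace)
  note S_lc_compatible = locally_closed_compatible_if_step_convex[OF fin mvf this
      isolated_invariant_step_convex[OF mvf iso]]
  have past: "past_recurrent \<gamma> \<subseteq> S" and future: "future_recurrent \<gamma> \<subseteq> S"
    using assms(4) unfolding past_recurrent_def future_recurrent_def by blast+
  show "alpha_lim X V \<gamma> \<subseteq> S"
    unfolding alpha_lim_eq by (rule lc_hull_least[OF past S_lc_compatible])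
  show "omega_lim X V \<gamma> \<subseteq> S"
    unfolding omega_lim_eq by (rule lc_hull_least[OF future S_lc_compatible])
qed

section \<open>Coarsening a Morse predecomposition\<close>

lemma essential_in_topspace: "essential X V \<gamma> \<Longrightarrow> ess_sol_in X V (topspace X) \<gamma>"
  unfolding ess_sol_in_def essential_def full_solution_def by blast

lemma eSol_essential: "\<gamma> \<in> eSol X V P M Q \<Longrightarrow> essential X V \<gamma>"
  unfolding eSol_def ess_sol_in_def by simp

lemma eSol_range_subset: "\<gamma> \<in> eSol X V P M Q \<Longrightarrow> range \<gamma> \<subseteq> M_Q X V P M Q"
  unfolding M_Q_def by blast

lemma M_Q_subset_topspace: "M_Q X V P M Q \<subseteq> topspace X"
  unfolding M_Q_def eSol_def ess_sol_in_def by blast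

lemma M_QE:
  assumes "x \<in> M_Q X V P M Q"
  obtains \<gamma> s where "\<gamma> \<in> eSol X V P M Q" "\<gamma> s = x"
  using assms unfolding M_Q_def by blast

lemma eSol_concat:
  assumes \<rho>: "\<rho> \<in> eSol X V P M Q" and \<rho>': "\<rho>' \<in> eSol X V P M Q"
    and \<sigma>: "sol_path X V \<sigma> a b" and "\<rho> s = \<sigma> a" "\<rho>' s' = \<sigma> b"
  obtains \<delta> where "\<delta> \<in> eSol X V P M Q" "\<sigma> ` {a..b} \<subseteq> range \<delta>" "\<delta> 0 = \<sigma> a"
proof -
  obtain \<delta> where \<delta>: "essential X V \<delta>" "alpha_lim X V \<delta> = alpha_lim X V \<rho>"
    "omega_lim X V \<delta> = omega_lim X V \<rho>'" "\<sigma> ` {a..b} \<subseteq> range \<delta>" "\<delta> 0 = \<sigma> a"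
    using essential_concat[OF eSol_essential[OF \<rho>] eSol_essential[OF \<rho>'] \<sigma>] assms(4,5) by blast
  have "\<delta> \<in> eSol X V P M Q"
    using \<rho> \<rho>' essential_in_topspace[OF \<delta>(1)] \<delta>(2,3) unfolding eSol_def by simp
  with \<delta>(4,5) show ?thesis using that by blast
qed

lemma M_Q_invariant: "invariant X V (M_Q X V P M Q)"
  unfolding invariant_def
proof
  show "M_Q X V P M Q \<subseteq> Inv X V (M_Q X V P M Q)"
  proof
    fix x assume x: "x \<in> M_Q X V P M Q"
    then obtain \<rho> s where \<rho>: "\<rho> \<in> eSol X V P M Q" "\<rho> s = x" by (rule M_QE)
    have "sol_path X V (\<lambda>_. x) 0 0"
      using x M_Q_subset_topspace unfolding sol_path_def by fastforce
    then obtain \<delta> where "\<delta> \<in> eSol X V P M Q" "\<delta> 0 = x"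
      using eSol_concat[OF \<rho>(1) \<rho>(1)] \<rho>(2) by metis
    then show "x \<in> Inv X V (M_Q X V P M Q)"
      using x eSol_essential eSol_range_subset unfolding Inv_def ess_sol_in_def by blast
  qed
qed (auto simp: Inv_def)

lemma M_Q_isolated_invariant:
  assumes mvf: "multivector_field X V"
  shows "isolated_invariant X V (M_Q X V P M Q)"
  unfolding isolated_invariant_def
proof (intro conjI exI)
  show "closedin X (topspace X)" by simp
  show "(\<Union>x\<in>M_Q X V P M Q. Pi_mv X V x) \<subseteq> topspace X"
    using Pi_mv_subset_topspace[OF mvf] M_Q_subset_topspace[of X V P M Q] by blast
  show "\<forall>\<sigma> a b. sol_path X V \<sigma> a b \<and> \<sigma> ` {a..b} \<subseteq> topspace X
      \<and> \<sigma> a \<in> M_Q X V P M Q \<and> \<sigma> b \<in> M_Q X V P M Q \<longrightarrow> \<sigma> ` {a..b} \<subseteq> M_Q X V P M Q"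
  proof (intro allI impI, elim conjE)
    fix \<sigma> a b assume \<sigma>: "sol_path X V \<sigma> a b"
      and start: "\<sigma> a \<in> M_Q X V P M Q" and stop: "\<sigma> b \<in> M_Q X V P M Q"
    obtain \<rho> s where \<rho>: "\<rho> \<in> eSol X V P M Q" "\<rho> s = \<sigma> a" using start by (rule M_QE)
    obtain \<rho>' s' where \<rho>': "\<rho>' \<in> eSol X V P M Q" "\<rho>' s' = \<sigma> b" using stop by (rule M_QE)
    obtain \<delta> where "\<delta> \<in> eSol X V P M Q" "\<sigma> ` {a..b} \<subseteq> range \<delta>" "\<delta> 0 = \<sigma> a"
      by (rule eSol_concat[OF \<rho>(1) \<rho>'(1) \<sigma> \<rho>(2) \<rho>'(2)])
    then show "\<sigma> ` {a..b} \<subseteq> M_Q X V P M Q" using eSol_range_subset by blast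
  qed
qed (rule M_Q_invariant)

locale morse_coarsening =
  fixes X :: "'a topology" and V :: "'a set set" and P :: "'p set" and M :: "'p \<Rightarrow> 'a set"
    and leq :: "'p \<Rightarrow> 'p \<Rightarrow> bool" and \<Q> :: "'p set set"
  assumes finite_space: "finite (topspace X)" and mvf: "multivector_field X V"
    and predecomposition: "morse_predecomposition X V P M"
    and admissible: "admissible X V P M leq"
    and partition: "set_partition P \<Q>"
    and induced_order: "partial_order_on' \<Q> (induced_le leq)"
begin

lemma Morse_sets_disjoint: "p \<in> P \<Longrightarrow> q \<in> P \<Longrightarrow> p \<noteq> q \<Longrightarrow> M p \<inter> M q = {}"
  using predecomposition unfolding morse_predecomposition_def by simp

lemma Morse_set_isolated_invariant: "p \<in> P \<Longrightarrow> isolated_invariant X V (M p)"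
  using predecomposition unfolding morse_predecomposition_def by simp

lemma essential_solution_link:
  "ess_sol_in X V (topspace X) \<gamma> \<Longrightarrow> \<exists>p\<in>P. \<exists>q\<in>P. link X V \<gamma> (M p) (M q)"
  using predecomposition unfolding morse_predecomposition_def by simp

lemma in_some_block: "p \<in> P \<Longrightarrow> \<exists>R\<in>\<Q>. p \<in> R"
  using partition unfolding set_partition_def by blast

lemma block_subset: "R \<in> \<Q> \<Longrightarrow> R \<subseteq> P"
  using partition unfolding set_partition_def by blast

lemma Morse_set_subset_M_Q:
  assumes "p \<in> R" "R \<subseteq> P"
  shows "M p \<subseteq> M_Q X V P M R"
proof
  fix y assume y: "y \<in> M p"
  have p: "p \<in> P" using assms by blast
  note iso = Morse_set_isolated_invariant[OF p]
  then have "Inv X V (M p) = M p" unfolding isolated_invariant_def invariant_def by simp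
  then obtain \<rho> where \<rho>: "essential X V \<rho>" "range \<rho> \<subseteq> M p" "\<rho> 0 = y"
    using y unfolding Inv_def ess_sol_in_def by blast
  obtain p1 p2 where "p1 \<in> P" "p2 \<in> P" and link: "link X V \<rho> (M p1) (M p2)"
    using essential_solution_link[OF essential_in_topspace[OF \<rho>(1)]] by blast
  moreover note isolated_invariant_limits_subset[OF finite_space mvf iso \<rho>(2)]
  ultimately have "p1 = p" "p2 = p"
    using Morse_sets_disjoint[OF _ p] unfolding link_def by blast+
  with link have "\<rho> \<in> eSol X V P M R"
    using essential_in_topspace[OF \<rho>(1)] p assms(1)
    unfolding eSol_def idx_meet_def link_def by blast
  then show "y \<in> M_Q X V P M R" using eSol_range_subset \<rho>(3) by blast
qed

lemma eSol_reachable_induced_le: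
  assumes \<rho>: "\<rho> \<in> eSol X V P M R" and \<rho>': "\<rho>' \<in> eSol X V P M R'"
    and reach: "(mv_step X V)\<^sup>*\<^sup>* (\<rho> s) (\<rho>' s')"
  shows "induced_le leq R' R"
proof -
  have "\<rho> s \<in> topspace X"
    using eSol_essential[OF \<rho>] unfolding essential_def full_solution_def by blast
  then obtain \<sigma> b where \<sigma>: "sol_path X V \<sigma> 0 b" "\<sigma> 0 = \<rho> s" "\<sigma> b = \<rho>' s'"
    using sol_path_if_reachable[OF reach] by blast
  obtain \<delta> where \<delta>: "essential X V \<delta>" "alpha_lim X V \<delta> = alpha_lim X V \<rho>"
    "omega_lim X V \<delta> = omega_lim X V \<rho>'"
    using essential_concat[OF eSol_essential[OF \<rho>] eSol_essential[OF \<rho>'] \<sigma>(1)] \<sigma>(2,3)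
    by metis
  obtain q where q: "q \<in> P" "q \<in> R" "M q \<inter> alpha_lim X V \<rho> \<noteq> {}"
    using \<rho> unfolding eSol_def idx_meet_def by blast
  obtain q' where q': "q' \<in> P" "q' \<in> R'" "M q' \<inter> omega_lim X V \<rho>' \<noteq> {}"
    using \<rho>' unfolding eSol_def idx_meet_def by blast
  have "link X V \<delta> (M q) (M q')"
    using \<delta> q q' unfolding link_def essential_def by blast
  then have "leq q' q" using admissible q(1) q'(1) unfolding admissible_def by blast
  then show ?thesis unfolding induced_le_def using q q' by blast
qed

lemma M_Q_disjoint:
  assumes R: "R \<in> \<Q>" and R': "R' \<in> \<Q>" and "R \<noteq> R'"
  shows "M_Q X V P M R \<inter> M_Q X V P M R' = {}"
proof (rule ccontr)
  assume "M_Q X V P M R \<inter> M_Q X V P M R' \<noteq> {}"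
  then obtain x where x: "x \<in> M_Q X V P M R" "x \<in> M_Q X V P M R'" by blast
  obtain \<rho> s where \<rho>: "\<rho> \<in> eSol X V P M R" "\<rho> s = x" using x(1) by (rule M_QE)
  obtain \<rho>' s' where \<rho>': "\<rho>' \<in> eSol X V P M R'" "\<rho>' s' = x" using x(2) by (rule M_QE)
  have "induced_le leq R' R" "induced_le leq R R'"
    using eSol_reachable_induced_le[OF \<rho>(1) \<rho>'(1), of s s']
      eSol_reachable_induced_le[OF \<rho>'(1) \<rho>(1), of s' s] \<rho>(2) \<rho>'(2) by simp_all
  then have "R = R'" using induced_order R R' unfolding partial_order_on'_def by blast
  with \<open>R \<noteq> R'\<close> show False by contradiction
qed

lemma Morse_set_meets_M_Q_imp_in_block:
  assumes p: "p \<in> P" and R: "R \<in> \<Q>" and meet: "M p \<inter> M_Q X V P M R \<noteq> {}"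
  shows "p \<in> R"
proof -
  obtain R' where R': "R' \<in> \<Q>" "p \<in> R'" using in_some_block[OF p] by blast
  then have "M_Q X V P M R' \<inter> M_Q X V P M R \<noteq> {}"
    using Morse_set_subset_M_Q[OF R'(2) block_subset[OF R'(1)]] meet by blast
  then have "R' = R" using M_Q_disjoint[OF R'(1) R] by blast
  with R'(2) show ?thesis by simp
qed

lemma M_Q_link:
  assumes "ess_sol_in X V (topspace X) \<gamma>"
  shows "\<exists>R\<in>\<Q>. \<exists>R'\<in>\<Q>. link X V \<gamma> (M_Q X V P M R) (M_Q X V P M R')"
proof -
  obtain p q where "p \<in> P" "q \<in> P" and link: "link X V \<gamma> (M p) (M q)"
    using essential_solution_link[OF assms] by blast
  then obtain R R' where R: "R \<in> \<Q>" "p \<in> R" and R': "R' \<in> \<Q>" "q \<in> R'"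
    using in_some_block by blast
  have "link X V \<gamma> (M_Q X V P M R) (M_Q X V P M R')"
    using link Morse_set_subset_M_Q[OF R(2) block_subset[OF R(1)]]
      Morse_set_subset_M_Q[OF R'(2) block_subset[OF R'(1)]]
    unfolding link_def by blast
  with R(1) R'(1) show ?thesis by blast
qed

lemma M_Q_saturated:
  assumes R: "R \<in> \<Q>"
  shows "saturated X V (M_Q X V P M R)"
  unfolding saturated_def
proof (intro conjI allI impI)
  show "invariant X V (M_Q X V P M R)" by (rule M_Q_invariant)
  fix \<gamma> assume "ess_sol_in X V (topspace X) \<gamma> \<and>
    alpha_lim X V \<gamma> \<union> omega_lim X V \<gamma> \<subseteq> M_Q X V P M R"
  then have \<gamma>: "ess_sol_in X V (topspace X) \<gamma>"
    and limits: "alpha_lim X V \<gamma> \<union> omega_lim X V \<gamma> \<subseteq> M_Q X V P M R" by blast+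
  obtain p q where p: "p \<in> P" and q: "q \<in> P" and link: "link X V \<gamma> (M p) (M q)"
    using essential_solution_link[OF \<gamma>] by blast
  have "p \<in> R" "q \<in> R"
    using Morse_set_meets_M_Q_imp_in_block[OF p R] Morse_set_meets_M_Q_imp_in_block[OF q R] link limits
    unfolding link_def by blast+
  with \<gamma> p q link have "\<gamma> \<in> eSol X V P M R"
    unfolding eSol_def idx_meet_def link_def by blast
  then show "range \<gamma> \<subseteq> M_Q X V P M R" by (rule eSol_range_subset)
qed

lemma M_Q_admissible: "admissible X V \<Q> (M_Q X V P M) (induced_le leq)"
  unfolding admissible_def
proof (intro conjI ballI impI)
  show "preorder_on \<Q> (induced_le leq)"
    using induced_order unfolding partial_order_on'_def by simp
  fix R R' assume "\<exists>\<gamma>. link X V \<gamma> (M_Q X V P M R) (M_Q X V P M R')"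
  then obtain \<gamma> y y' where \<gamma>: "full_solution X V \<gamma>"
    and y: "y \<in> alpha_lim X V \<gamma>" "y \<in> M_Q X V P M R"
    and y': "y' \<in> omega_lim X V \<gamma>" "y' \<in> M_Q X V P M R'"
    unfolding link_def by blast
  obtain \<rho> s where \<rho>: "\<rho> \<in> eSol X V P M R" "\<rho> s = y" using y(2) by (rule M_QE)
  obtain \<rho>' s' where \<rho>': "\<rho>' \<in> eSol X V P M R'" "\<rho>' s' = y'" using y'(2) by (rule M_QE)
  show "induced_le leq R' R"
    using eSol_reachable_induced_le[OF \<rho>(1) \<rho>'(1)] \<rho>(2) \<rho>'(2)
      alpha_lim_reaches_omega_lim[OF finite_space mvf \<gamma> y(1) y'(1)] by blast
qed

end

theorem theorem4p13:
  fixes X :: "'a topology" and V :: "'a set set"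
    and P :: "'p set" and M :: "'p \<Rightarrow> 'a set" and leq :: "'p \<Rightarrow> 'p \<Rightarrow> bool"
    and \<Q> :: "'p set set"
  assumes "finite (topspace X)" and "t0_space X"
    and "multivector_field X V"
    and "invariant X V (topspace X)"
    and "morse_predecomposition X V P M"
    and "admissible X V P M leq"
    and "set_partition P \<Q>"
    and "\<forall>Q\<in>\<Q>. convex_wrt P leq Q"
    and "partial_order_on' \<Q> (induced_le leq)"
  shows "morse_decomposition X V \<Q> (M_Q X V P M)"
proof -
  interpret morse_coarsening X V P M leq \<Q>
    using assms(1,3,5,6,7,9) by unfold_locales
  have "morse_predecomposition X V \<Q> (M_Q X V P M)"
    unfolding morse_predecomposition_def
    using M_Q_disjoint M_Q_isolated_invariant[OF mvf] M_Q_link by blast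
  then show ?thesis
    unfolding morse_decomposition_def
    using M_Q_saturated M_Q_admissible induced_order by blast
qed

end
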